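(* Let $0<a<1$ and let $(\mathbf X_j)_{j\ge0}$ be the persistent random walk on $\mathbb Z$ with persistence parameter $a$ started at $\mathbf X_0=0$. Let $\mathbf L:=\inf\{j\ge1:\mathbf X_j=0\}$, let $\mathbf R,\mathbf V$ be the numbers of runs and short runs of the excursion path $\mathbf X_0,\dots,\mathbf X_{\mathbf L}$, and $\mathbf H:=\max\{|\mathbf X_j|:1\le j\le\mathbf L\}$. For $N\ge1$ let $K_N(a):=E\{r^{\mathbf R}y^{\mathbf V}z^{\mathbf L}\mid\mathbf X_0=0,\ \mathbf H\le N\}$. Then for all $N\ge1$, $$K_N(a)=\frac{N-(N-1)a}{N}\cdot\frac{r^2z^2\,q^*_N(a)}{w^*_N(a)},$$ as an identity of formal power series in $z$ with coefficients polynomial in $r,y$ (the right side being expanded in powers of $z$; note $w^*_N(a)=1$ at $z=0$).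
   Context: Persistent random walk with parameter $a$: increments $\varepsilon_j\in\{\pm1\}$, $P(\varepsilon_1=\pm1)=\frac12$, and for $j\ge1$ the next increment equals the previous with probability $a$, reversed with probability $1-a$. A run of a nearest-neighbour path is a maximal block of consecutive steps all $+1$ or all $-1$; a short run is a run of one step. Define $\omega_a:=1-(1-a)^2r^2y^2z^2$, $\tau_a:=1+(1-a)^2r^2z^2y(1-y)$, $x_a:=a^2z^2\tau_a^2$, $\beta_a:=1+z^2(a^2-(1-a)^2r^2(y^2+a^2(1-y)^2z^2))$; $w^*_0(a):=(\beta_a-\omega_a)/x_a$, $w^*_1(a):=1$, $w^*_{n+1}(a):=\beta_aw^*_n(a)-x_aw^*_{n-1}(a)$ ($n\ge1$); $q^*_0(a):=-(1-y)(1+y+(1-a)^2r^2y^2z^2(1-y))/\tau_a^2$, $q^*_1(a):=y^2$, $q^*_{n+1}(a):=\beta_aq^*_n(a)-x_aq^*_{n-1}(a)$ ($n\ge1$). *)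

theory Defs
  imports "HOL-Computational_Algebra.Formal_Power_Series"
begin

text \<open>A finite increment sequence eps_1..eps_n is an int list with entries in {-1,1}.\<close>

definition path_prob :: "real \<Rightarrow> int list \<Rightarrow> real" where
  "path_prob a es =
     (if es = [] then 1
      else (1/2) * (\<Prod>j<length es - 1. if es ! Suc j = es ! j then a else 1 - a))"

definition walk :: "int list \<Rightarrow> nat \<Rightarrow> int" where
  "walk es k = sum_list (take k es)"

definition exc_paths :: "nat \<Rightarrow> nat \<Rightarrow> int list set" where
  "exc_paths n N = {es. length es = n \<and> set es \<subseteq> {-1, 1} \<and> 1 \<le> n \<and>
       walk es n = 0 \<and> (\<forall>k\<in>{1..<n}. walk es k \<noteq> 0) \<and>
       (\<forall>k\<in>{1..n}. \<bar>walk es k\<bar> \<le> int N)}"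

fun runs :: "'a list \<Rightarrow> 'a list list" where
  "runs [] = []"
| "runs (x # xs) =
     (case runs xs of
        [] \<Rightarrow> [[x]]
      | r # rs \<Rightarrow> (if hd r = x then (x # r) # rs else [x] # r # rs))"

definition num_runs :: "'a list \<Rightarrow> nat" where
  "num_runs es = length (runs es)"

definition num_short_runs :: "'a list \<Rightarrow> nat" where
  "num_short_runs es = length (filter (\<lambda>b. length b = 1) (runs es))"

definition prob_H_le :: "real \<Rightarrow> nat \<Rightarrow> real" where
  "prob_H_le a N = (\<Sum>n. \<Sum>es\<in>exc_paths n N. path_prob a es)"

text \<open>K_N(a) = E[r^R y^V z^L | H \<le> N] as a formal power series in z:
  the coefficient of z^n is E[r^R y^V; L = n, H \<le> N] / P(H \<le> N).\<close>
definition K_fps :: "real \<Rightarrow> real \<Rightarrow> real \<Rightarrow> nat \<Rightarrow> real fps" where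
  "K_fps a r y N = Abs_fps (\<lambda>n.
     (\<Sum>es\<in>exc_paths n N. path_prob a es * r ^ num_runs es * y ^ num_short_runs es)
       / prob_H_le a N)"

definition omega_a :: "real \<Rightarrow> real \<Rightarrow> real \<Rightarrow> real fps" where
  "omega_a a r y = 1 - fps_const ((1 - a)^2 * r^2 * y^2) * fps_X^2"

definition tau_a :: "real \<Rightarrow> real \<Rightarrow> real \<Rightarrow> real fps" where
  "tau_a a r y = 1 + fps_const ((1 - a)^2 * r^2) * fps_X^2 * fps_const (y * (1 - y))"

definition x_a :: "real \<Rightarrow> real \<Rightarrow> real \<Rightarrow> real fps" where
  "x_a a r y = fps_const (a^2) * fps_X^2 * (tau_a a r y)^2"

definition beta_a :: "real \<Rightarrow> real \<Rightarrow> real \<Rightarrow> real fps" where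
  "beta_a a r y = 1 + fps_X^2 * (fps_const (a^2) - fps_const ((1 - a)^2 * r^2) *
      (fps_const (y^2) + fps_const (a^2 * (1 - y)^2) * fps_X^2))"

fun w_star :: "real \<Rightarrow> real \<Rightarrow> real \<Rightarrow> nat \<Rightarrow> real fps" where
  "w_star a r y 0 = (beta_a a r y - omega_a a r y) / x_a a r y"
| "w_star a r y (Suc 0) = 1"
| "w_star a r y (Suc (Suc n)) =
     beta_a a r y * w_star a r y (Suc n) - x_a a r y * w_star a r y n"

fun q_star :: "real \<Rightarrow> real \<Rightarrow> real \<Rightarrow> nat \<Rightarrow> real fps" where
  "q_star a r y 0 = - fps_const (1 - y) *
      (fps_const (1 + y) + fps_const ((1 - a)^2 * r^2 * y^2 * (1 - y)) * fps_X^2)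
      / (tau_a a r y)^2"
| "q_star a r y (Suc 0) = fps_const (y^2)"
| "q_star a r y (Suc (Suc n)) =
     beta_a a r y * q_star a r y (Suc n) - x_a a r y * q_star a r y n"

end

theory Submission
  imports Defs "HOL-Library.Sublist"
begin

text \<open>A step's contribution to \<open>r\<^sup>R y\<^sup>V\<close> depends only on its neighbours: it
  contributes \<open>r\<close> if it starts a run and a further \<open>y\<close> if that run ends with it. Hence the
  statistic is a product of local weights, and generating functions of paths factor along
  concatenations once the step across each cut is remembered. Up to sign, an excursion of
  height at most \<open>h + 1\<close> is an up-step, a Dyck path of height at most \<open>h\<close> and a down-step,
  and a Dyck path splits at its first return into a positive excursion and a Dyck path. This
  expresses the generating function of Dyck paths of height at most \<open>h + 1\<close> as a linear
  fractional transformation of that for height \<open>h\<close>, so its numerator and denominator are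
  obtained by iterating a \<open>2 \<times> 2\<close> transfer matrix; by Cayley-Hamilton they satisfy the
  three-term recurrence defining \<open>q\<^sup>*\<close> and \<open>w\<^sup>*\<close>. The normalising probability \<open>P(H \<le> N)\<close>
  is the same generating function at \<open>z = r = y = 1\<close>, evaluated through the same
  recurrences.\<close>

unbundle fps_syntax

subsection \<open>Runs\<close>

definition first_run_short :: "'a \<Rightarrow> 'a list \<Rightarrow> bool" where
  "first_run_short e es \<longleftrightarrow> es = [] \<or> hd es \<noteq> e"

lemma runs_Cons_Cons:
  "runs (e' # es) = b # bs \<Longrightarrow>
   runs (e # e' # es) = (if hd b = e then (e # b) # bs else [e] # b # bs)"
  by (simp del: runs.simps add: runs.simps(2)[of e "e' # es"])

lemma runs_Cons:
  "\<exists>b bs. runs (e # es) = b # bs \<and> b \<noteq> [] \<and> hd b = e \<and>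
     (length b = 1 \<longleftrightarrow> first_run_short e es)"
proof (induction es arbitrary: e)
  case Nil
  then show ?case by (simp add: first_run_short_def)
next
  case (Cons e' es)
  from Cons.IH[of e'] obtain b bs where b: "runs (e' # es) = b # bs" "b \<noteq> []" "hd b = e'"
    by blast
  note runs_ee' = runs_Cons_Cons[OF b(1), of e]
  show ?case
  proof (cases "e = e'")
    case True
    then show ?thesis
      using b runs_ee' by (intro exI[of _ "e # b"] exI[of _ bs]) (simp add: first_run_short_def)
  next
    case False
    then show ?thesis
      using b runs_ee' by (intro exI[of _ "[e]"] exI[of _ "b # bs"]) (simp add: first_run_short_def)
  qed
qed

lemma num_runs_Cons_Cons:
  "num_runs (e # e' # es) = num_runs (e' # es) + of_bool (e \<noteq> e')"
proof -
  obtain b bs where "runs (e' # es) = b # bs" "hd b = e'"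
    using runs_Cons[of e' es] by blast
  then show ?thesis by (simp add: num_runs_def runs_Cons_Cons)
qed

lemma num_runs_Cons_pos: "1 \<le> num_runs (e # es)"
  using runs_Cons[of e es] by (auto simp: num_runs_def)

lemma num_short_runs_Cons:
  fixes e :: 'a
  obtains bs :: "'a list list" where
    "num_short_runs (e # es) = of_bool (first_run_short e es) + length (filter (\<lambda>b. length b = 1) bs)"
    "\<And>e'. num_short_runs (e' # e # es) =
      (if e' = e then length (filter (\<lambda>b. length b = 1) bs) else Suc (num_short_runs (e # es)))"
proof -
  obtain b bs where b: "runs (e # es) = b # bs" "b \<noteq> []" "hd b = e"
    "length b = 1 \<longleftrightarrow> first_run_short e es"
    using runs_Cons[of e es] by blast
  then show thesis
    using that[of bs] runs_Cons_Cons[OF b(1)] by (auto simp: num_short_runs_def)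
qed

lemma num_short_runs_Cons_ge: "of_bool (first_run_short e es) \<le> num_short_runs (e # es)"
  by (rule num_short_runs_Cons[of e es]) simp

lemma num_short_runs_Cons_Cons:
  "num_short_runs (e' # e # es) =
    (if e' = e then num_short_runs (e # es) - of_bool (first_run_short e es)
     else Suc (num_short_runs (e # es)))"
  by (rule num_short_runs_Cons[of e es]) simp

subsection \<open>Run statistics as a product of local step weights\<close>

definition step_prob :: "real \<Rightarrow> int option \<Rightarrow> int \<Rightarrow> real" where
  "step_prob a before e = (case before of None \<Rightarrow> 1/2 | Some p \<Rightarrow> if p = e then a else 1 - a)"

fun seq_prob :: "real \<Rightarrow> int option \<Rightarrow> int list \<Rightarrow> real" where
  "seq_prob a before [] = 1"
| "seq_prob a before (e # es) = step_prob a before e * seq_prob a (Some e) es"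

text \<open>A step that starts a new run contributes a factor \<open>r\<close>, and a further factor \<open>y\<close>
  if that run ends with it. Knowing the neighbouring steps (\<open>None\<close> at the ends of the whole
  path) thus makes \<open>r\<^sup>R y\<^sup>V\<close> multiplicative along the path.\<close>

definition step_weight :: "real \<Rightarrow> real \<Rightarrow> real \<Rightarrow> int option \<Rightarrow> int \<Rightarrow> int option \<Rightarrow> real" where
  "step_weight a r y before e after =
     step_prob a before e * (if before = Some e then 1 else r * (if after = Some e then 1 else y))"

definition next_step :: "int list \<Rightarrow> int option \<Rightarrow> int option" where
  "next_step es after = (case es of [] \<Rightarrow> after | e # _ \<Rightarrow> Some e)"

fun weight :: "real \<Rightarrow> real \<Rightarrow> real \<Rightarrow> int option \<Rightarrow> int option \<Rightarrow> int list \<Rightarrow> real" where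
  "weight a r y before after [] = 1"
| "weight a r y before after (e # es) =
     step_weight a r y before e (next_step es after) * weight a r y (Some e) after es"

lemma seq_prob_Some:
  "seq_prob a (Some e) es = (\<Prod>j<length es. if (e # es) ! Suc j = (e # es) ! j then a else 1 - a)"
proof (induction es arbitrary: e)
  case (Cons e' es)
  then show ?case
    by (simp only: length_Cons prod.lessThan_Suc_shift nth_Cons_Suc nth_Cons_0)
       (simp add: step_prob_def)
qed simp

lemma path_prob_eq_seq_prob: "path_prob a es = seq_prob a None es"
  by (cases es) (simp_all add: path_prob_def step_prob_def seq_prob_Some)

lemma next_step_None_eq_Some_iff: "next_step es None = Some e \<longleftrightarrow> \<not> first_run_short e es"
  by (cases es) (auto simp: next_step_def first_run_short_def)

lemma power_eq_mult_power_diff: "m \<le> n \<Longrightarrow> (x :: 'a :: monoid_mult) ^ n = x ^ m * x ^ (n - m)"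
  by (simp add: power_add[symmetric])

text \<open>After a known step \<open>e\<close>, the first run of \<open>e # es\<close> has already been paid for.\<close>

lemma weight_Some_None:
  "weight a r y (Some e) None es =
     seq_prob a (Some e) es * r ^ (num_runs (e # es) - 1) *
     y ^ (num_short_runs (e # es) - of_bool (first_run_short e es))"
proof (induction es arbitrary: e)
  case Nil
  then show ?case by (simp add: num_runs_def num_short_runs_def first_run_short_def)
next
  case (Cons e' es)
  show ?case
  proof (cases "e = e'")
    case True
    then show ?thesis
      using Cons.IH[of e']
      by (simp add: step_weight_def step_prob_def num_runs_Cons_Cons num_short_runs_Cons_Cons
          first_run_short_def)
  next
    case False
    have "step_weight a r y (Some e) e' (next_step es None) =
        (1 - a) * r * y ^ of_bool (first_run_short e' es)"
      using False by (auto simp: step_weight_def step_prob_def next_step_None_eq_Some_iff)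
    moreover have "r ^ num_runs (e' # es) = r * r ^ (num_runs (e' # es) - 1)"
      using power_eq_mult_power_diff[OF num_runs_Cons_pos] by simp
    moreover note power_eq_mult_power_diff[OF num_short_runs_Cons_ge, of y e' es]
    ultimately show ?thesis
      using False Cons.IH[of e']
      by (simp add: num_runs_Cons_Cons num_short_runs_Cons_Cons step_prob_def first_run_short_def)
  qed
qed

lemma weight_None_None:
  assumes "es \<noteq> []"
  shows "weight a r y None None es = path_prob a es * r ^ num_runs es * y ^ num_short_runs es"
proof -
  obtain e es' where es: "es = e # es'" using assms by (cases es) auto
  have "step_weight a r y None e (next_step es' None) = 1/2 * r * y ^ of_bool (first_run_short e es')"
    by (auto simp: step_weight_def step_prob_def next_step_None_eq_Some_iff)
  moreover have "r ^ num_runs (e # es') = r * r ^ (num_runs (e # es') - 1)"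
    using power_eq_mult_power_diff[OF num_runs_Cons_pos] by simp
  moreover note power_eq_mult_power_diff[OF num_short_runs_Cons_ge, of y e es']
  ultimately show ?thesis
    unfolding es by (simp add: weight_Some_None path_prob_eq_seq_prob step_prob_def)
qed

lemma weight_map_uminus:
  "weight a r y (map_option uminus before) (map_option uminus after) (map uminus es) =
   weight a r y before after es"
proof (induction es arbitrary: before)
  case (Cons e es)
  have "step_weight a r y (map_option uminus before) (- e)
          (next_step (map uminus es) (map_option uminus after)) =
        step_weight a r y before e (next_step es after)"
    by (cases before; cases after; cases es) (auto simp: step_weight_def step_prob_def next_step_def)
  then show ?case using Cons.IH[of "Some e"] by simp
qed simp

lemma weight_append:
  "weight a r y before after (u @ v) =
   weight a r y before (next_step v after) u *
   weight a r y (if u = [] then before else Some (last u)) after v"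
proof (induction u arbitrary: before)
  case (Cons e u)
  have "next_step (u @ v) after = next_step u (next_step v after)"
    by (cases u) (auto simp: next_step_def)
  then show ?case using Cons.IH[of "Some e"] by simp
qed simp

subsection \<open>Dyck paths and positive excursions\<close>

lemma walk_0 [simp]: "walk es 0 = 0"
  by (simp add: walk_def)

lemma walk_append: "walk (u @ v) k = walk u k + walk v (k - length u)"
  by (simp add: walk_def)

lemma walk_length_le: "length es \<le> k \<Longrightarrow> walk es k = sum_list es"
  by (simp add: walk_def)

lemma walk_Suc: "k < length es \<Longrightarrow> walk es (Suc k) = walk es k + es ! k"
  by (simp add: walk_def take_Suc_conv_app_nth)

lemma walk_map_uminus: "walk (map uminus es) k = - walk es k"
proof -
  have "sum_list (map uminus xs) = - sum_list (xs :: int list)" for xs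
    by (induction xs) auto
  then show ?thesis by (simp add: walk_def take_map)
qed

lemma nth_pm1: "set es \<subseteq> {-1, 1} \<Longrightarrow> k < length es \<Longrightarrow> es ! k = 1 \<or> es ! k = -1"
  using nth_mem by fastforce

definition dyck_path :: "nat \<Rightarrow> int list \<Rightarrow> bool" where
  "dyck_path h xs \<longleftrightarrow> set xs \<subseteq> {-1, 1} \<and> walk xs (length xs) = 0 \<and>
     (\<forall>k\<le>length xs. 0 \<le> walk xs k \<and> walk xs k \<le> int h)"

definition pos_excursion :: "nat \<Rightarrow> int list \<Rightarrow> bool" where
  "pos_excursion h es \<longleftrightarrow> set es \<subseteq> {-1, 1} \<and> 1 \<le> length es \<and> walk es (length es) = 0 \<and>
     (\<forall>k\<in>{1..<length es}. 1 \<le> walk es k \<and> walk es k \<le> int h)"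

definition dyck_paths :: "nat \<Rightarrow> nat \<Rightarrow> int list set" where
  "dyck_paths h n = {xs. length xs = n \<and> dyck_path h xs}"

definition nonempty_dyck_paths :: "nat \<Rightarrow> nat \<Rightarrow> int list set" where
  "nonempty_dyck_paths h n = {xs. length xs = n \<and> xs \<noteq> [] \<and> dyck_path h xs}"

definition pos_excursions :: "nat \<Rightarrow> nat \<Rightarrow> int list set" where
  "pos_excursions h n = {es. length es = n \<and> pos_excursion h es}"

lemma finite_pm1_lists: "finite {xs :: int list. set xs \<subseteq> {-1, 1} \<and> length xs = n}"
  by (rule finite_lists_length_eq) simp

lemma finite_dyck_paths: "finite (dyck_paths h n)"
  by (rule finite_subset[OF _ finite_pm1_lists[of n]]) (auto simp: dyck_paths_def dyck_path_def)

lemma finite_pos_excursions: "finite (pos_excursions h n)"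
  by (rule finite_subset[OF _ finite_pm1_lists[of n]])
     (auto simp: pos_excursions_def pos_excursion_def)

lemma finite_exc_paths: "finite (exc_paths n N)"
  by (rule finite_subset[OF _ finite_pm1_lists[of n]]) (auto simp: exc_paths_def)

lemma dyck_paths_eq: "dyck_paths h n = (if n = 0 then {[]} else nonempty_dyck_paths h n)"
  by (auto simp: dyck_paths_def nonempty_dyck_paths_def dyck_path_def)

lemma dyck_path_first_last:
  assumes "dyck_path h xs" and "xs \<noteq> []"
  shows "hd xs = 1" and "last xs = -1"
proof -
  have pm: "set xs \<subseteq> {-1, 1}" and bounds: "\<And>k. k \<le> length xs \<Longrightarrow> 0 \<le> walk xs k"
    and ret: "walk xs (length xs) = 0"
    using assms(1) by (auto simp: dyck_path_def)
  have "walk xs 1 = xs ! 0" using walk_Suc[of 0 xs] assms(2) by simp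
  moreover have "0 \<le> walk xs 1" using bounds assms(2) by (simp add: Suc_leI)
  ultimately show "hd xs = 1"
    using nth_pm1[OF pm, of 0] assms(2) by (auto simp: hd_conv_nth)
  let ?m = "length xs - 1"
  have "walk xs (Suc ?m) = walk xs ?m + xs ! ?m" using assms(2) by (intro walk_Suc) simp
  moreover have "Suc ?m = length xs" using assms(2) by simp
  moreover have "0 \<le> walk xs ?m" using bounds by simp
  ultimately show "last xs = -1"
    using nth_pm1[OF pm, of ?m] ret assms(2) by (auto simp: last_conv_nth)
qed

lemma nonempty_dyck_paths_0: "nonempty_dyck_paths 0 n = {}"
proof -
  have False if "dyck_path 0 xs" "xs \<noteq> []" for xs
  proof -
    have "1 \<le> length xs" using that(2) by (cases xs) auto
    then have "0 \<le> walk xs 1 \<and> walk xs 1 \<le> 0" using that(1) unfolding dyck_path_def by simp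
    then have "walk xs 1 = 0" by simp
    moreover have "walk xs 1 = hd xs" using walk_Suc[of 0 xs] that(2) by (simp add: hd_conv_nth)
    ultimately show False using dyck_path_first_last(1)[OF that] by simp
  qed
  then show ?thesis by (auto simp: nonempty_dyck_paths_def)
qed

lemma walk_wrap:
  assumes "1 \<le> k" "k \<le> length xs + 1"
  shows "walk (1 # xs @ [-1]) k = 1 + walk xs (k - 1)"
proof -
  have "walk (1 # xs @ [-1]) k = walk [1] k + walk (xs @ [-1]) (k - 1)"
    using walk_append[of "[1]" "xs @ [-1]" k] by simp
  also have "walk (xs @ [-1]) (k - 1) = walk xs (k - 1)"
    using assms by (simp add: walk_append)
  also have "walk [1] k = 1" using assms by (simp add: walk_def)
  finally show ?thesis by simp
qed

lemma pos_excursion_wrap_iff: "pos_excursion (Suc h) (1 # xs @ [-1]) \<longleftrightarrow> dyck_path h xs"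
proof -
  have ret: "walk (1 # xs @ [-1]) (length (1 # xs @ [-1])) = walk xs (length xs)"
    by (simp add: walk_def)
  have inner: "(\<forall>k\<in>{1..<length (1 # xs @ [-1])}.
        1 \<le> walk (1 # xs @ [-1]) k \<and> walk (1 # xs @ [-1]) k \<le> int (Suc h)) \<longleftrightarrow>
      (\<forall>k\<le>length xs. 0 \<le> walk xs k \<and> walk xs k \<le> int h)"
  proof
    assume *: "\<forall>k\<in>{1..<length (1 # xs @ [-1])}.
        1 \<le> walk (1 # xs @ [-1]) k \<and> walk (1 # xs @ [-1]) k \<le> int (Suc h)"
    show "\<forall>k\<le>length xs. 0 \<le> walk xs k \<and> walk xs k \<le> int h"
    proof (intro allI impI)
      fix k assume "k \<le> length xs"
      then show "0 \<le> walk xs k \<and> walk xs k \<le> int h"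
        using *[rule_format, of "Suc k"] walk_wrap[of "Suc k" xs] by simp
    qed
  next
    assume *: "\<forall>k\<le>length xs. 0 \<le> walk xs k \<and> walk xs k \<le> int h"
    show "\<forall>k\<in>{1..<length (1 # xs @ [-1])}.
        1 \<le> walk (1 # xs @ [-1]) k \<and> walk (1 # xs @ [-1]) k \<le> int (Suc h)"
    proof
      fix k assume k: "k \<in> {1..<length (1 # xs @ [-1])}"
      then have "k - 1 \<le> length xs" by auto
      then show "1 \<le> walk (1 # xs @ [-1]) k \<and> walk (1 # xs @ [-1]) k \<le> int (Suc h)"
        using *[rule_format, of "k - 1"] walk_wrap[of k xs] k by simp
    qed
  qed
  show ?thesis
    unfolding pos_excursion_def dyck_path_def ret inner by auto
qed

lemma pos_excursion_wrap:
  assumes "pos_excursion h es"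
  shows "\<exists>xs. es = 1 # xs @ [-1]"
proof -
  have pm: "set es \<subseteq> {-1, 1}" and ret: "walk es (length es) = 0"
    and pos: "\<And>k. k \<in> {1..<length es} \<Longrightarrow> 1 \<le> walk es k"
    using assms by (auto simp: pos_excursion_def)
  have "2 \<le> length es"
  proof (rule ccontr)
    assume "\<not> 2 \<le> length es"
    then have "length es = 1" using assms by (simp add: pos_excursion_def)
    then show False using ret walk_Suc[of 0 es] nth_pm1[OF pm, of 0] by auto
  qed
  then obtain e es'' where "es = e # es''" "es'' \<noteq> []"
    by (cases es) (auto simp: Suc_le_length_iff)
  then obtain es' e' where es: "es = e # es' @ [e']"
    by (metis rev_exhaust)
  have "1 \<le> walk es 1" using pos \<open>2 \<le> length es\<close> by simp
  then have "e = 1" using es pm by (auto simp: walk_def)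
  have "length es - 1 \<in> {1..<length es}" using \<open>2 \<le> length es\<close> by auto
  then have "1 \<le> walk es (length es - 1)" by (rule pos)
  moreover have "walk es (length es) = walk es (length es - 1) + e'"
    using es by (simp add: walk_def)
  ultimately have "e' = -1" using ret es pm by auto
  then show ?thesis using es \<open>e = 1\<close> by blast
qed

lemma pos_excursions_less_2: "n < 2 \<Longrightarrow> pos_excursions h n = {}"
  using pos_excursion_wrap by (fastforce simp: pos_excursions_def)

lemma pos_excursions_Suc:
  "2 \<le> n \<Longrightarrow> pos_excursions (Suc h) n = (\<lambda>xs. 1 # xs @ [-1]) ` dyck_paths h (n - 2)"
proof (intro equalityI subsetI)
  fix es assume "es \<in> pos_excursions (Suc h) n"
  then have exc: "pos_excursion (Suc h) es" "length es = n" by (auto simp: pos_excursions_def)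
  obtain xs where "es = 1 # xs @ [-1]" using pos_excursion_wrap[OF exc(1)] by blast
  with exc show "es \<in> (\<lambda>xs. 1 # xs @ [-1]) ` dyck_paths h (n - 2)"
    by (auto simp: dyck_paths_def pos_excursion_wrap_iff)
qed (auto simp: pos_excursions_def dyck_paths_def pos_excursion_wrap_iff)

lemma pos_excursion_prefix_unique:
  assumes "pos_excursion h e" "pos_excursion h e'" "e @ v = e' @ v'"
  shows "e = e' \<and> v = v'"
proof -
  have not_shorter: "\<not> length A < length B"
    if A: "pos_excursion h A" and B: "pos_excursion h B" and eq: "A @ w = B @ w'" for A B w w'
  proof
    assume lt: "length A < length B"
    have "take (length A) B = take (length A) (B @ w')" using lt by simp
    also have "\<dots> = A" using eq by (metis append_eq_conv_conj)
    finally have "walk B (length A) = walk A (length A)" by (simp add: walk_def)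
    then have "walk B (length A) = 0" using A by (simp add: pos_excursion_def)
    moreover have "length A \<in> {1..<length B}" using lt A by (auto simp: pos_excursion_def)
    then have "1 \<le> walk B (length A)" using B unfolding pos_excursion_def by blast
    ultimately show False by simp
  qed
  have "length e = length e'"
    using not_shorter[OF assms] not_shorter[OF assms(2,1) assms(3)[symmetric]] by simp
  then show ?thesis using assms(3) by simp
qed

lemma dyck_path_append:
  assumes E: "pos_excursion h e" and M: "dyck_path h v"
  shows "dyck_path h (e @ v)"
proof -
  have sum_e: "sum_list e = 0" using E walk_length_le[of e "length e"] by (simp add: pos_excursion_def)
  have "0 \<le> walk (e @ v) k \<and> walk (e @ v) k \<le> int h" if "k \<le> length (e @ v)" for k
  proof (cases "k \<le> length e")
    case True
    then have "walk (e @ v) k = walk e k" by (simp add: walk_append)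
    moreover consider "k = 0" | "k \<in> {1..<length e}" | "k = length e" using True by fastforce
    then have "0 \<le> walk e k \<and> walk e k \<le> int h"
    proof cases
      case 2
      then have "1 \<le> walk e k \<and> walk e k \<le> int h" using E unfolding pos_excursion_def by blast
      then show ?thesis by simp
    qed (use E in \<open>simp_all add: pos_excursion_def\<close>)
    ultimately show ?thesis by simp
  next
    case False
    then have "walk (e @ v) k = walk v (k - length e)"
      using sum_e walk_length_le[of e k] by (simp add: walk_append)
    moreover have "k - length e \<le> length v" using that by simp
    ultimately show ?thesis using M by (simp add: dyck_path_def)
  qed
  moreover have "walk (e @ v) (length (e @ v)) = 0"
    using sum_e M walk_length_le[of e "length (e @ v)"] by (simp add: walk_append dyck_path_def)
  moreover have "set (e @ v) \<subseteq> {-1, 1}" using E M by (simp add: pos_excursion_def dyck_path_def)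
  ultimately show ?thesis by (simp add: dyck_path_def)
qed

lemma dyck_path_first_return:
  assumes M: "dyck_path h xs" and ne: "xs \<noteq> []"
  obtains k where "k \<le> length xs" "pos_excursion h (take k xs)" "dyck_path h (drop k xs)"
proof -
  define P where "P k \<longleftrightarrow> 1 \<le> k \<and> walk xs k = 0" for k
  have "P (length xs)" using M ne by (auto simp: P_def dyck_path_def Suc_le_eq)
  define k where "k = (LEAST k. P k)"
  have Pk: "P k" and kle: "k \<le> length xs"
    unfolding k_def using LeastI[of P] Least_le[of P] \<open>P (length xs)\<close> by auto
  have before_k: "\<not> P j" if "j < k" for j using not_less_Least[of j P] that k_def by simp
  let ?e = "take k xs" and ?v = "drop k xs"
  have walk_e: "walk ?e j = walk xs j" if "j \<le> k" for j
    using that by (simp add: walk_def min_def)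
  have walk_v: "walk ?v j = walk xs (k + j)" for j
  proof -
    have len_e: "length ?e = k" using kle by simp
    have "walk xs (k + j) = walk (?e @ ?v) (k + j)" by simp
    also have "\<dots> = walk ?e (k + j) + walk ?v j" by (simp only: walk_append len_e) simp
    also have "walk ?e (k + j) = walk ?e k"
      using walk_length_le[of ?e "k + j"] walk_length_le[of ?e k] len_e by simp
    finally show ?thesis using walk_e[of k] Pk by (simp add: P_def)
  qed
  have "pos_excursion h ?e"
  proof -
    have "1 \<le> walk ?e j \<and> walk ?e j \<le> int h" if j: "j \<in> {1..<k}" for j
    proof -
      have "0 \<le> walk xs j \<and> walk xs j \<le> int h" using M j kle by (auto simp: dyck_path_def)
      moreover have "walk xs j \<noteq> 0" using before_k[of j] j by (auto simp: P_def)
      ultimately show ?thesis using walk_e[of j] j by auto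
    qed
    then show ?thesis
      using M Pk kle walk_e[of k] set_take_subset[of k xs]
      by (auto simp: pos_excursion_def dyck_path_def P_def)
  qed
  moreover have "dyck_path h ?v"
    using M kle set_drop_subset[of k xs] by (auto simp: dyck_path_def walk_v)
  ultimately show thesis using that kle by blast
qed

lemma sum_nonempty_dyck_paths:
  fixes g :: "int list \<Rightarrow> real"
  shows "(\<Sum>xs\<in>nonempty_dyck_paths h n. g xs) =
    (\<Sum>k\<le>n. \<Sum>e\<in>pos_excursions h k. \<Sum>v\<in>dyck_paths h (n - k). g (e @ v))"
proof -
  define S where "S = (SIGMA k:{..n}. pos_excursions h k \<times> dyck_paths h (n - k))"
  have "(\<Sum>k\<le>n. \<Sum>e\<in>pos_excursions h k. \<Sum>v\<in>dyck_paths h (n - k). g (e @ v)) =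
      (\<Sum>(k, e, v)\<in>S. g (e @ v))"
    unfolding S_def sum.cartesian_product
    by (subst sum.Sigma) (auto simp: finite_pos_excursions finite_dyck_paths)
  also have "\<dots> = (\<Sum>x\<in>S. g ((\<lambda>(k, e, v). e @ v) x))"
    by (rule sum.cong) auto
  also have "\<dots> = (\<Sum>xs\<in>nonempty_dyck_paths h n. g xs)"
  proof (rule sum.reindex_bij_betw, rule bij_betwI')
    fix x x' assume "x \<in> S" "x' \<in> S"
    then obtain k e v k' e' v' where x: "x = (k, e, v)" "x' = (k', e', v')"
      and exc: "pos_excursion h e" "length e = k" "pos_excursion h e'" "length e' = k'"
      by (auto simp: S_def pos_excursions_def)
    show "((\<lambda>(k, e, v). e @ v) x = (\<lambda>(k, e, v). e @ v) x') = (x = x')"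
      using pos_excursion_prefix_unique[OF exc(1,3)] exc(2,4) x by auto
  next
    fix x assume "x \<in> S"
    then obtain k e v where x: "x = (k, e, v)" "pos_excursion h e" "length e = k"
      "dyck_path h v" "length v = n - k" "k \<le> n"
      by (auto simp: S_def pos_excursions_def dyck_paths_def)
    then have "e \<noteq> []" by (auto simp: pos_excursion_def)
    then show "(\<lambda>(k, e, v). e @ v) x \<in> nonempty_dyck_paths h n"
      using x dyck_path_append[OF x(2,4)] by (simp add: nonempty_dyck_paths_def)
  next
    fix xs assume "xs \<in> nonempty_dyck_paths h n"
    then have M: "dyck_path h xs" "xs \<noteq> []" "length xs = n"
      by (auto simp: nonempty_dyck_paths_def)
    obtain k where "k \<le> n" "pos_excursion h (take k xs)" "dyck_path h (drop k xs)"
      using dyck_path_first_return[OF M(1,2)] M(3) by metis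
    then have "(k, take k xs, drop k xs) \<in> S"
      using M(3) by (simp add: S_def pos_excursions_def dyck_paths_def)
    then show "\<exists>x\<in>S. xs = (\<lambda>(k, e, v). e @ v) x" by force
  qed
  finally show ?thesis by simp
qed

lemma pos_excursion_if_exc_path:
  assumes "es \<in> exc_paths n N" "es ! 0 = 1"
  shows "es \<in> pos_excursions N n"
proof -
  have pm: "set es \<subseteq> {-1, 1}" and len: "length es = n" "1 \<le> n"
    and nz: "\<forall>k\<in>{1..<n}. walk es k \<noteq> 0" and bd: "\<forall>k\<in>{1..n}. \<bar>walk es k\<bar> \<le> int N"
    using assms(1) by (auto simp: exc_paths_def)
  have pos: "Suc k < n \<Longrightarrow> 1 \<le> walk es (Suc k)" for k
  proof (induction k)
    case 0
    then show ?case using walk_Suc[of 0 es] len assms(2) by simp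
  next
    case (Suc k)
    then have "walk es (Suc (Suc k)) = walk es (Suc k) + es ! Suc k"
      using len by (intro walk_Suc) simp
    moreover have "walk es (Suc (Suc k)) \<noteq> 0" using nz Suc.prems by simp
    ultimately show ?case using Suc nth_pm1[OF pm, of "Suc k"] len by auto
  qed
  have "1 \<le> walk es k \<and> walk es k \<le> int N" if k: "k \<in> {1..<n}" for k
  proof -
    have "1 \<le> walk es k" using pos[of "k - 1"] k by simp
    moreover have "\<bar>walk es k\<bar> \<le> int N" using bd k by simp
    ultimately show ?thesis by simp
  qed
  moreover have "walk es n = 0" using assms(1) by (simp add: exc_paths_def)
  ultimately show ?thesis using pm len by (simp add: pos_excursions_def pos_excursion_def)
qed

lemma exc_paths_eq:
  "exc_paths n N = pos_excursions N n \<union> map uminus ` pos_excursions N n"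
proof (intro equalityI subsetI)
  fix es assume es: "es \<in> exc_paths n N"
  have "es ! 0 = 1 \<or> es ! 0 = -1" using es nth_pm1[of es 0] by (auto simp: exc_paths_def)
  then show "es \<in> pos_excursions N n \<union> map uminus ` pos_excursions N n"
  proof
    assume "es ! 0 = 1"
    then show ?thesis using pos_excursion_if_exc_path es by blast
  next
    assume "es ! 0 = -1"
    moreover have "map uminus es \<in> exc_paths n N"
      using es by (auto simp: exc_paths_def walk_map_uminus)
    ultimately have "map uminus es \<in> pos_excursions N n"
      using es by (intro pos_excursion_if_exc_path) (auto simp: exc_paths_def)
    moreover have "es = map uminus (map uminus es)" by simp
    ultimately show ?thesis by blast
  qed
next
  have "es \<in> exc_paths n N" if es: "es \<in> pos_excursions N n" for es
  proof -
    have exc: "pos_excursion N es" "length es = n" using es by (auto simp: pos_excursions_def)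
    have bounds: "1 \<le> walk es k \<and> walk es k \<le> int N" if "k \<in> {1..<n}" for k
      using exc that unfolding pos_excursion_def by blast
    have ret: "walk es n = 0" using exc by (simp add: pos_excursion_def)
    have "\<forall>k\<in>{1..<n}. walk es k \<noteq> 0" using bounds by fastforce
    moreover have "\<forall>k\<in>{1..n}. \<bar>walk es k\<bar> \<le> int N"
    proof
      fix k assume "k \<in> {1..n}"
      then consider "k \<in> {1..<n}" | "k = n" by fastforce
      then show "\<bar>walk es k\<bar> \<le> int N" using bounds ret by cases fastforce+
    qed
    moreover have "set es \<subseteq> {-1, 1}" "1 \<le> n" using exc by (auto simp: pos_excursion_def)
    ultimately show ?thesis using exc ret by (simp add: exc_paths_def)
  qed
  moreover have "map uminus es \<in> exc_paths n N" if "es \<in> exc_paths n N" for es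
    using that by (auto simp: exc_paths_def walk_map_uminus)
  ultimately show "es \<in> exc_paths n N" if "es \<in> pos_excursions N n \<union> map uminus ` pos_excursions N n"
    for es
    using that by blast
qed

lemma pos_excursion_hd: "pos_excursion h es \<Longrightarrow> hd es = 1"
  using pos_excursion_wrap by fastforce

lemma pos_excursions_disjoint_uminus:
  "pos_excursions N n \<inter> map uminus ` pos_excursions N n = {}"
proof -
  have "hd (map uminus es) = -1" if "pos_excursion N es" for es
    using pos_excursion_hd[OF that] pos_excursion_wrap[OF that] by auto
  then show ?thesis using pos_excursion_hd by (fastforce simp: pos_excursions_def)
qed

subsection \<open>Generating functions of excursions and Dyck paths\<close>

definition exc_gf :: "real \<Rightarrow> real \<Rightarrow> real \<Rightarrow> nat \<Rightarrow> int option \<Rightarrow> int option \<Rightarrow> real fps" where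
  "exc_gf a r y h before after =
     Abs_fps (\<lambda>n. \<Sum>es\<in>pos_excursions h n. weight a r y before after es)"

text \<open>Inside a positive excursion a Dyck path is always followed by a down-step.\<close>

definition dyck_gf :: "real \<Rightarrow> real \<Rightarrow> real \<Rightarrow> nat \<Rightarrow> int option \<Rightarrow> real fps" where
  "dyck_gf a r y h before =
     Abs_fps (\<lambda>n. \<Sum>xs\<in>nonempty_dyck_paths h n. weight a r y before (Some (-1)) xs)"

definition exc_weight_gf :: "real \<Rightarrow> real \<Rightarrow> real \<Rightarrow> nat \<Rightarrow> real fps" where
  "exc_weight_gf a r y N = Abs_fps (\<lambda>n.
     \<Sum>es\<in>exc_paths n N. path_prob a es * r ^ num_runs es * y ^ num_short_runs es)"

lemma dyck_gf_0: "dyck_gf a r y 0 before = 0"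
  by (simp add: dyck_gf_def nonempty_dyck_paths_0 fps_eq_iff)

lemma weight_pos_excursion_append:
  assumes "es \<in> pos_excursions h k" "v \<in> nonempty_dyck_paths h m"
  shows "weight a r y before (Some (-1)) (es @ v) =
    weight a r y before (Some 1) es * weight a r y (Some (-1)) (Some (-1)) v"
proof -
  obtain xs where "es = 1 # xs @ [-1]"
    using assms(1) pos_excursion_wrap by (auto simp: pos_excursions_def)
  then have "es \<noteq> []" "last es = -1" by simp_all
  moreover have "next_step v (Some (-1)) = Some 1"
    using assms(2) dyck_path_first_last(1)[of h v]
    by (cases v) (auto simp: nonempty_dyck_paths_def next_step_def)
  ultimately show ?thesis by (simp add: weight_append)
qed

lemma dyck_gf_first_return:
  "dyck_gf a r y h before =
   exc_gf a r y h before (Some (-1)) + exc_gf a r y h before (Some 1) * dyck_gf a r y h (Some (-1))"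
  (is "_ = ?rhs")
proof (rule fps_ext)
  fix n
  let ?w = "weight a r y"
  let ?D = "\<lambda>m. \<Sum>v\<in>nonempty_dyck_paths h m. ?w (Some (-1)) (Some (-1)) v"
  have split: "(\<Sum>v\<in>dyck_paths h m. ?w before (Some (-1)) (es @ v)) =
      (if m = 0 then ?w before (Some (-1)) es else 0) + ?w before (Some 1) es * ?D m"
    if "es \<in> pos_excursions h k" for es k m
    using weight_pos_excursion_append[OF that]
    by (auto simp: dyck_paths_eq nonempty_dyck_paths_def sum_distrib_left next_step_def)
  have "dyck_gf a r y h before $ n =
      (\<Sum>k\<le>n. \<Sum>es\<in>pos_excursions h k. \<Sum>v\<in>dyck_paths h (n - k). ?w before (Some (-1)) (es @ v))"
    by (simp add: dyck_gf_def sum_nonempty_dyck_paths)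
  also have "\<dots> = (\<Sum>k\<le>n. \<Sum>es\<in>pos_excursions h k.
      (if n - k = 0 then ?w before (Some (-1)) es else 0) + ?w before (Some 1) es * ?D (n - k))"
    by (intro sum.cong refl split)
  also have "\<dots> = (\<Sum>es\<in>pos_excursions h n. ?w before (Some (-1)) es) +
      (\<Sum>k\<le>n. (\<Sum>es\<in>pos_excursions h k. ?w before (Some 1) es) * ?D (n - k))"
  proof -
    have "(\<Sum>k\<le>n. \<Sum>es\<in>pos_excursions h k. if n - k = 0 then ?w before (Some (-1)) es else 0) =
        (\<Sum>k\<le>n. if k = n then \<Sum>es\<in>pos_excursions h k. ?w before (Some (-1)) es else 0)"
      by (intro sum.cong refl) auto
    then show ?thesis by (simp add: sum.distrib sum_distrib_right)
  qed
  finally show "dyck_gf a r y h before $ n = ?rhs $ n"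
    by (simp add: exc_gf_def dyck_gf_def fps_mult_nth atMost_atLeast0)
qed

lemma weight_wrap:
  assumes "xs \<in> nonempty_dyck_paths h m"
  shows "weight a r y before after (1 # xs @ [-1]) =
    step_weight a r y before 1 (Some 1) * a * weight a r y (Some 1) (Some (-1)) xs"
proof -
  have xs: "xs \<noteq> []" "hd xs = 1" "last xs = -1"
    using assms dyck_path_first_last[of h xs] by (auto simp: nonempty_dyck_paths_def)
  then have "next_step xs (Some (-1)) = Some 1" by (cases xs) (auto simp: next_step_def)
  have "weight a r y before after ((1 # xs) @ [-1]) =
      weight a r y before (Some (-1)) (1 # xs) * weight a r y (Some (-1)) after [-1]"
    unfolding weight_append using xs by (simp add: next_step_def del: weight.simps)
  also have "\<dots> = step_weight a r y before 1 (Some 1) * weight a r y (Some 1) (Some (-1)) xs * a"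
    using \<open>next_step xs (Some (-1)) = Some 1\<close>
    by (simp add: step_weight_def step_prob_def next_step_def)
  finally show ?thesis by simp
qed

lemma exc_gf_Suc:
  "exc_gf a r y (Suc h) before after = fps_X ^ 2 * (fps_const (weight a r y before after [1, -1]) +
      fps_const (step_weight a r y before 1 (Some 1) * a) * dyck_gf a r y h (Some 1))"
  (is "_ = ?rhs")
proof (rule fps_ext)
  fix n
  show "exc_gf a r y (Suc h) before after $ n = ?rhs $ n"
  proof (cases "n < 2")
    case True
    then show ?thesis by (simp add: exc_gf_def pos_excursions_less_2 fps_X_power_mult_nth)
  next
    case False
    have inj: "inj_on (\<lambda>xs :: int list. 1 # xs @ [-1]) (dyck_paths h (n - 2))"
      by (auto simp: inj_on_def)
    have "exc_gf a r y (Suc h) before after $ n =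
        (\<Sum>xs\<in>dyck_paths h (n - 2). weight a r y before after (1 # xs @ [-1]))"
      using False by (simp add: exc_gf_def pos_excursions_Suc sum.reindex[OF inj])
    also have "\<dots> = (if n = 2 then weight a r y before after [1, -1] else
        step_weight a r y before 1 (Some 1) * a *
          (\<Sum>xs\<in>nonempty_dyck_paths h (n - 2). weight a r y (Some 1) (Some (-1)) xs))"
    proof (cases "n = 2")
      case False
      have "(\<Sum>xs\<in>nonempty_dyck_paths h (n - 2). weight a r y before after (1 # xs @ [-1])) =
          (\<Sum>xs\<in>nonempty_dyck_paths h (n - 2).
            step_weight a r y before 1 (Some 1) * a * weight a r y (Some 1) (Some (-1)) xs)"
        by (rule sum.cong[OF refl]) (rule weight_wrap)
      with False \<open>\<not> n < 2\<close> show ?thesis by (simp add: dyck_paths_eq sum_distrib_left)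
    qed (simp add: dyck_paths_eq)
    also have "\<dots> = ?rhs $ n"
      using False
      by (auto simp: fps_X_power_mult_nth dyck_gf_def nonempty_dyck_paths_def)
    finally show ?thesis .
  qed
qed

lemma exc_weight_gf_eq_exc_gf: "exc_weight_gf a r y N = 2 * exc_gf a r y N None None"
proof (rule fps_ext)
  fix n
  have inj: "inj_on (map (uminus :: int \<Rightarrow> int)) (pos_excursions N n)"
    by (auto simp: inj_on_def)
  have "exc_weight_gf a r y N $ n = (\<Sum>es\<in>exc_paths n N. weight a r y None None es)"
  proof -
    have "es \<noteq> []" if "es \<in> exc_paths n N" for es
      using that by (auto simp: exc_paths_def)
    then show ?thesis by (simp add: exc_weight_gf_def weight_None_None)
  qed
  also have "\<dots> = (\<Sum>es\<in>pos_excursions N n. weight a r y None None es) +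
      (\<Sum>es\<in>map uminus ` pos_excursions N n. weight a r y None None es)"
    unfolding exc_paths_eq
    by (rule sum.union_disjoint) (auto simp: finite_pos_excursions pos_excursions_disjoint_uminus)
  also have "(\<Sum>es\<in>map uminus ` pos_excursions N n. weight a r y None None es) =
      (\<Sum>es\<in>pos_excursions N n. weight a r y None None es)"
    using weight_map_uminus[of a r y None None] by (simp add: sum.reindex[OF inj])
  finally show "exc_weight_gf a r y N $ n = (2 * exc_gf a r y N None None) $ n"
    by (simp add: exc_gf_def numeral_fps_const)
qed

subsection \<open>The transfer recursion in the height bound\<close>

definition tm11 :: "real \<Rightarrow> real \<Rightarrow> real \<Rightarrow> real fps" where
  "tm11 a r y = fps_X^2 * fps_const a * (fps_const a * (1 - fps_const ((1-a)^2*r^2*(1-y)^2) * fps_X^2))"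

definition tm12 :: "real \<Rightarrow> real \<Rightarrow> real fps" where
  "tm12 a r = fps_X^2 * fps_const a * fps_const ((1-a)*r)"

definition tm21 :: "real \<Rightarrow> real \<Rightarrow> real fps" where
  "tm21 a r = - (fps_const ((1-a)*r*a) * fps_X^2)"

definition tm22 :: "real \<Rightarrow> real \<Rightarrow> real \<Rightarrow> real fps" where
  "tm22 a r y = 1 - fps_const ((1-a)^2*r^2*y^2) * fps_X^2"

text \<open>\<open>dyck_gf a r y h (Some 1)\<close> is the quotient \<open>dyck_num / dyck_den\<close>; raising the height bound
  by one multiplies the vector \<open>(dyck_num, dyck_den)\<close> by the matrix \<open>tm\<close>.\<close>

fun dyck_frac :: "real \<Rightarrow> real \<Rightarrow> real \<Rightarrow> nat \<Rightarrow> real fps \<times> real fps" where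
  "dyck_frac a r y 0 = (0, 1)"
| "dyck_frac a r y (Suc h) = (case dyck_frac a r y h of (P, Q) \<Rightarrow>
     (tm11 a r y * P + tm12 a r * Q, tm21 a r * P + tm22 a r y * Q))"

definition dyck_num :: "real \<Rightarrow> real \<Rightarrow> real \<Rightarrow> nat \<Rightarrow> real fps" where
  "dyck_num a r y h = fst (dyck_frac a r y h)"

definition dyck_den :: "real \<Rightarrow> real \<Rightarrow> real \<Rightarrow> nat \<Rightarrow> real fps" where
  "dyck_den a r y h = snd (dyck_frac a r y h)"

lemma dyck_num_0 [simp]: "dyck_num a r y 0 = 0"
  and dyck_den_0 [simp]: "dyck_den a r y 0 = 1"
  by (simp_all add: dyck_num_def dyck_den_def)

lemma dyck_num_Suc:
    "dyck_num a r y (Suc h) = tm11 a r y * dyck_num a r y h + tm12 a r * dyck_den a r y h"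
  and dyck_den_Suc:
    "dyck_den a r y (Suc h) = tm21 a r * dyck_num a r y h + tm22 a r y * dyck_den a r y h"
  by (simp_all add: dyck_num_def dyck_den_def split: prod.split)

lemma dyck_den_nth_0: "dyck_den a r y h $ 0 = 1"
  by (induction h) (simp_all add: dyck_den_Suc tm21_def tm22_def)

text \<open>Splitting constants into products of atoms lets \<open>algebra\<close> treat \<open>a\<close>, \<open>r\<close>, \<open>y\<close> as
  ring variables.\<close>

lemmas fps_const_split = fps_const_mult[symmetric] fps_const_sub[symmetric]
  fps_const_add[symmetric] fps_const_power[symmetric] fps_const_neg[symmetric]
lemmas fps_const_merge = fps_const_mult fps_const_sub fps_const_add fps_const_power fps_const_neg

lemma fps_const_numeral: "fps_const (numeral k) = numeral k"
  by (simp add: numeral_fps_const)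

lemma linear_eq_elim:
  fixes A B C D S T :: "'a :: comm_ring_1"
  assumes "T = C + A * T" and "S = D + B * T"
  shows "S * (1 - A) = D * (1 - A) + B * C"
proof -
  have "T * (1 - A) = C" using assms(1) by (simp add: algebra_simps)
  moreover have "S * (1 - A) = D * (1 - A) + B * (T * (1 - A))"
    using assms(2) by (simp add: algebra_simps)
  ultimately show ?thesis by simp
qed

lemma dyck_gf_mult_den: "dyck_gf a r y h (Some 1) * dyck_den a r y h = dyck_num a r y h"
proof (induction h)
  case 0
  then show ?case by (simp add: dyck_gf_0)
next
  case (Suc h)
  define s where "s = dyck_gf a r y h (Some 1)"
  define X :: "real fps" where "X = fps_X"
  define ca cr cy where "ca = fps_const a" and "cr = fps_const r" and "cy = fps_const y"
  let ?E = "exc_gf a r y (Suc h)"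
  have E: "?E (Some (-1)) (Some 1) = X^2 * ((1-ca)*cr*cy*((1-ca)*cr*cy) + (1-ca)*cr*ca * s)"
    "?E (Some 1) (Some 1) = X^2 * (ca * ((1-ca)*cr*cy) + ca * ca * s)"
    "?E (Some (-1)) (Some (-1)) = X^2 * ((1-ca)*cr*cy*((1-ca)*cr) + (1-ca)*cr*ca * s)"
    "?E (Some 1) (Some (-1)) = X^2 * (ca * ((1-ca)*cr) + ca * ca * s)"
    unfolding s_def X_def ca_def cr_def cy_def
    by (simp_all del: fps_const_merge add: exc_gf_Suc step_weight_def step_prob_def next_step_def
        fps_const_split)
  txt \<open>Eliminate \<open>dyck_gf a r y (Suc h) (Some (-1))\<close> from the two first-return equations.\<close>
  have "dyck_gf a r y (Suc h) (Some 1) * (1 - ?E (Some (-1)) (Some 1)) =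
      ?E (Some 1) (Some (-1)) * (1 - ?E (Some (-1)) (Some 1)) +
      ?E (Some 1) (Some 1) * ?E (Some (-1)) (Some (-1))"
    by (rule linear_eq_elim) (rule dyck_gf_first_return)+
  also have "\<dots> = X^2 * ca * ((1-ca)*cr + ca * (1 - ((1-ca)^2*cr^2*(1-cy)^2) * X^2) * s)"
    unfolding E by algebra
  finally have S: "dyck_gf a r y (Suc h) (Some 1) * (1 - ?E (Some (-1)) (Some 1)) =
      X^2 * ca * ((1-ca)*cr + ca * (1 - ((1-ca)^2*cr^2*(1-cy)^2) * X^2) * s)" .
  have IH: "s * dyck_den a r y h = dyck_num a r y h" using Suc.IH by (simp add: s_def)
  have "dyck_den a r y (Suc h) = (1 - ?E (Some (-1)) (Some 1)) * dyck_den a r y h"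
    unfolding dyck_den_Suc E tm21_def tm22_def X_def ca_def cr_def cy_def IH[symmetric]
    by (simp del: fps_const_merge add: fps_const_split algebra_simps power2_eq_square fps_const_numeral)
  moreover have "dyck_num a r y (Suc h) =
      X^2 * ca * ((1-ca)*cr + ca * (1 - ((1-ca)^2*cr^2*(1-cy)^2) * X^2) * s) * dyck_den a r y h"
    unfolding dyck_num_Suc tm11_def tm12_def X_def ca_def cr_def cy_def IH[symmetric]
    by (simp del: fps_const_merge add: fps_const_split algebra_simps fps_const_numeral)
  ultimately show ?case using S by (simp add: mult.assoc[symmetric])
qed

lemma cayley_hamilton_2x2:
  fixes P Q m11 m12 m21 m22 :: "'a :: comm_ring_1"
  shows "m11 * (m11 * P + m12 * Q) + m12 * (m21 * P + m22 * Q) =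
      (m11 + m22) * (m11 * P + m12 * Q) - (m11 * m22 - m12 * m21) * P"
    and "m21 * (m11 * P + m12 * Q) + m22 * (m21 * P + m22 * Q) =
      (m11 + m22) * (m21 * P + m22 * Q) - (m11 * m22 - m12 * m21) * Q"
  by (simp_all add: algebra_simps)

lemma beta_a_eq_trace: "beta_a a r y = tm11 a r y + tm22 a r y"
  unfolding beta_a_def tm11_def tm22_def
  by (simp del: fps_const_merge add: fps_const_split fps_const_numeral) algebra

lemma x_a_eq_det: "x_a a r y = tm11 a r y * tm22 a r y - tm12 a r * tm21 a r"
  unfolding x_a_def tau_a_def tm11_def tm12_def tm21_def tm22_def
  by (simp del: fps_const_merge add: fps_const_split fps_const_numeral) algebra

lemma dyck_num_Suc_Suc:
  "dyck_num a r y (Suc (Suc n)) = beta_a a r y * dyck_num a r y (Suc n) - x_a a r y * dyck_num a r y n"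
  unfolding beta_a_eq_trace x_a_eq_det dyck_num_Suc[of _ _ _ "Suc n"] dyck_num_Suc[of _ _ _ n]
    dyck_den_Suc[of _ _ _ n]
  by (rule cayley_hamilton_2x2(1))

lemma dyck_den_Suc_Suc:
  "dyck_den a r y (Suc (Suc n)) = beta_a a r y * dyck_den a r y (Suc n) - x_a a r y * dyck_den a r y n"
  unfolding beta_a_eq_trace x_a_eq_det dyck_den_Suc[of _ _ _ "Suc n"] dyck_num_Suc[of _ _ _ n]
    dyck_den_Suc[of _ _ _ n]
  by (rule cayley_hamilton_2x2(2))

lemma tau_a_squared_nth_0: "(tau_a a r y ^ 2) $ 0 = 1"
  by (simp add: fps_power_zeroth tau_a_def)

lemma x_a_nonzero: "a \<noteq> 0 \<Longrightarrow> x_a a r y \<noteq> 0"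
  using tau_a_squared_nth_0[of a r y] by (auto simp: x_a_def)

text \<open>The seeds \<open>w_star 0\<close> and \<open>q_star 0\<close> are what makes \<open>w_star (Suc n)\<close> and
  \<open>q_star (Suc n)\<close> satisfy the same recurrence as \<open>dyck_den n\<close> and \<open>dyck_num n\<close> already
  from \<open>n = 0\<close> on.\<close>

lemma x_a_mult_w_star_0: "a \<noteq> 0 \<Longrightarrow> x_a a r y * w_star a r y 0 = beta_a a r y - omega_a a r y"
proof -
  assume a: "a \<noteq> 0"
  define g where "g = (1 - fps_const ((1-a)^2*r^2*(1-y)^2) * fps_X^2) * inverse (tau_a a r y ^ 2)"
  have inv: "tau_a a r y ^ 2 * inverse (tau_a a r y ^ 2) = 1"
    using tau_a_squared_nth_0 by (intro inverse_mult_eq_1') simp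
  have "x_a a r y * g = fps_const (a^2) * fps_X^2 * (1 - fps_const ((1-a)^2*r^2*(1-y)^2) * fps_X^2) *
      (tau_a a r y ^ 2 * inverse (tau_a a r y ^ 2))"
    unfolding x_a_def g_def by (simp add: algebra_simps)
  also have "\<dots> = beta_a a r y - omega_a a r y"
    unfolding inv beta_a_def omega_a_def
    by (simp del: fps_const_merge add: fps_const_split fps_const_numeral) algebra
  finally have eq: "x_a a r y * g = beta_a a r y - omega_a a r y" .
  then have "w_star a r y 0 = (x_a a r y * g) / x_a a r y" by simp
  also have "\<dots> = g" using x_a_nonzero[OF a] by simp
  finally have "w_star a r y 0 = g" .
  then show ?thesis using eq by simp
qed

lemma w_star_Suc_eq_dyck_den:
  assumes "a \<noteq> 0"
  shows "w_star a r y (Suc n) = dyck_den a r y n"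
proof -
  have "w_star a r y (Suc n) = dyck_den a r y n \<and> w_star a r y (Suc (Suc n)) = dyck_den a r y (Suc n)"
  proof (induction n)
    case 0
    have "w_star a r y 2 = omega_a a r y" using x_a_mult_w_star_0[OF assms] by (simp add: numeral_2_eq_2)
    then show ?case by (simp add: numeral_2_eq_2 dyck_den_Suc omega_a_def tm21_def tm22_def)
  next
    case (Suc n)
    then have IH: "w_star a r y (Suc n) = dyck_den a r y n"
      "w_star a r y (Suc (Suc n)) = dyck_den a r y (Suc n)" by auto
    have "w_star a r y (Suc (Suc (Suc n))) =
        beta_a a r y * w_star a r y (Suc (Suc n)) - x_a a r y * w_star a r y (Suc n)"
      by (rule w_star.simps(3))
    then show ?case unfolding IH dyck_den_Suc_Suc[of a r y n] using IH(2) by simp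
  qed
  then show ?thesis ..
qed

lemma x_a_mult_q_star_0:
  "x_a a r y * q_star a r y 0 =
   - fps_const (a^2) * fps_X^2 * fps_const (1 - y) *
     (fps_const (1 + y) + fps_const ((1 - a)^2 * r^2 * y^2 * (1 - y)) * fps_X^2)"
proof -
  have inv: "tau_a a r y ^ 2 * inverse (tau_a a r y ^ 2) = 1"
    using tau_a_squared_nth_0 by (intro inverse_mult_eq_1') simp
  have "q_star a r y 0 = - fps_const (1 - y) *
      (fps_const (1 + y) + fps_const ((1 - a)^2 * r^2 * y^2 * (1 - y)) * fps_X^2) *
      inverse (tau_a a r y ^ 2)"
    using tau_a_squared_nth_0 by (simp add: fps_divide_unit)
  then show ?thesis
    unfolding x_a_def using inv by (simp only: ac_simps mult_minus_left mult_minus_right) simp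
qed

lemma q_star_Suc_eq:
  shows "fps_const ((1-a)*r) * q_star a r y (Suc n) =
    fps_const ((1-a)*r*y^2) * dyck_den a r y n + fps_const a * dyck_num a r y n"
proof -
  let ?c = "fps_const ((1-a)*r)" and ?V = "\<lambda>n. fps_const ((1-a)*r*y^2) * dyck_den a r y n +
    fps_const a * dyck_num a r y n"
  have "?c * q_star a r y (Suc n) = ?V n \<and> ?c * q_star a r y (Suc (Suc n)) = ?V (Suc n)"
  proof (induction n)
    case 0
    have "?c * q_star a r y (Suc (Suc 0)) =
        ?c * (beta_a a r y * fps_const (y^2) - x_a a r y * q_star a r y 0)"
      by simp
    also have "\<dots> = ?V (Suc 0)"
      unfolding x_a_mult_q_star_0 dyck_num_Suc dyck_den_Suc beta_a_def tm11_def tm12_def tm21_def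
        tm22_def
      by (simp del: fps_const_merge add: fps_const_split fps_const_numeral) algebra
    finally show ?case by simp
  next
    case (Suc n)
    from Suc.IH have IH: "?c * q_star a r y (Suc n) = ?V n" "?c * q_star a r y (Suc (Suc n)) = ?V (Suc n)"
      by auto
    have "?c * q_star a r y (Suc (Suc (Suc n))) =
        beta_a a r y * (?c * q_star a r y (Suc (Suc n))) - x_a a r y * (?c * q_star a r y (Suc n))"
      by (simp add: algebra_simps)
    also have "\<dots> = beta_a a r y * ?V (Suc n) - x_a a r y * ?V n"
      unfolding IH ..
    also have "\<dots> = ?V (Suc (Suc n))"
      unfolding dyck_num_Suc_Suc[of a r y n] dyck_den_Suc_Suc[of a r y n] by (simp add: algebra_simps)
    finally show ?case using IH(2) by simp
  qed
  then show ?thesis ..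
qed

lemma exc_weight_gf_Suc:
  "exc_weight_gf a r y (Suc h) =
   fps_X^2 * (fps_const ((1-a)*r^2*y^2) + fps_const (r*a) * dyck_gf a r y h (Some 1))"
  unfolding exc_weight_gf_eq_exc_gf exc_gf_Suc
  by (simp add: numeral_fps_const step_weight_def step_prob_def next_step_def algebra_simps
      power2_eq_square)

lemma exc_weight_gf_mult_den:
  "exc_weight_gf a r y (Suc h) * dyck_den a r y h =
   fps_X^2 * (fps_const ((1-a)*r^2*y^2) * dyck_den a r y h + fps_const (r*a) * dyck_num a r y h)"
  unfolding exc_weight_gf_Suc dyck_gf_mult_den[symmetric] by (simp add: algebra_simps)

lemma exc_weight_gf_eq_quotient:
  assumes "a \<noteq> 0"
  shows "exc_weight_gf a r y (Suc h) = fps_const (1 - a) *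
     (fps_const (r^2) * fps_X^2 * q_star a r y (Suc h) / w_star a r y (Suc h))"
proof -
  have w: "w_star a r y (Suc h) = dyck_den a r y h" by (rule w_star_Suc_eq_dyck_den[OF assms])
  have "exc_weight_gf a r y (Suc h) * w_star a r y (Suc h) =
      fps_X^2 * fps_const r *
        (fps_const ((1-a)*r*y^2) * dyck_den a r y h + fps_const a * dyck_num a r y h)"
    unfolding w exc_weight_gf_mult_den by (simp add: algebra_simps power2_eq_square)
  also have "\<dots> = fps_const (1 - a) * (fps_const (r^2) * fps_X^2 * q_star a r y (Suc h))"
    unfolding q_star_Suc_eq[symmetric] by (simp add: algebra_simps power2_eq_square)
  finally have eq: "exc_weight_gf a r y (Suc h) * w_star a r y (Suc h) =
      fps_const (1 - a) * (fps_const (r^2) * fps_X^2 * q_star a r y (Suc h))" .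
  have unit: "w_star a r y (Suc h) $ 0 \<noteq> 0" using w dyck_den_nth_0 by simp
  have "exc_weight_gf a r y (Suc h) =
      exc_weight_gf a r y (Suc h) * w_star a r y (Suc h) * inverse (w_star a r y (Suc h))"
    using inverse_mult_eq_1'[OF unit] by (simp add: mult.assoc)
  then show ?thesis
    using unit by (simp add: eq fps_divide_unit mult.assoc)
qed

subsection \<open>The probability of a bounded excursion\<close>

lemma step_prob_nonneg: "0 \<le> a \<Longrightarrow> a \<le> 1 \<Longrightarrow> 0 \<le> step_prob a before e"
  by (cases before) (auto simp: step_prob_def)

lemma seq_prob_nonneg: "0 \<le> a \<Longrightarrow> a \<le> 1 \<Longrightarrow> 0 \<le> seq_prob a before es"
  by (induction es arbitrary: before) (auto intro!: mult_nonneg_nonneg step_prob_nonneg)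

text \<open>A Kraft-type inequality: the cylinder events of a prefix-free set of step sequences are
  disjoint, so their probabilities add up to at most one.\<close>

lemma sum_seq_prob_prefix_free_le_1:
  assumes "0 \<le> a" "a \<le> 1" "before \<in> {None, Some 1, Some (-1)}" "finite S"
    "\<forall>u\<in>S. set u \<subseteq> {-1, 1}" "\<forall>u\<in>S. \<forall>v\<in>S. prefix u v \<longrightarrow> u = v"
  shows "(\<Sum>u\<in>S. seq_prob a before u) \<le> 1"
proof -
  have "(\<Sum>u\<in>S. seq_prob a before u) \<le> 1"
    if "before \<in> {None, Some 1, Some (-1)}" "finite S" "\<forall>u\<in>S. set u \<subseteq> {-1, 1}"
      "\<forall>u\<in>S. \<forall>v\<in>S. prefix u v \<longrightarrow> u = v" "\<forall>u\<in>S. length u \<le> m" for m S before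
    using that
  proof (induction m arbitrary: S before)
    case 0
    then have "S \<subseteq> {[]}" by auto
    then show ?case by (auto dest: subset_singletonD)
  next
    case (Suc m)
    show ?case
    proof (cases "[] \<in> S")
      case True
      then have "S = {[]}" using Suc.prems(4) by fastforce
      then show ?thesis by simp
    next
      case False
      define S' where "S' x = tl ` {u\<in>S. hd u = x}" for x :: int
      have S_x: "{u\<in>S. hd u = x} = (\<lambda>v. x # v) ` S' x" for x
      proof -
        have "(\<lambda>u. x # tl u) ` {u\<in>S. hd u = x} = (\<lambda>u. u) ` {u\<in>S. hd u = x}"
          by (rule image_cong) (use False in \<open>auto intro!: hd_Cons_tl\<close>)
        then show ?thesis by (simp add: S'_def image_image)
      qed
      have part: "(\<Sum>u\<in>{u\<in>S. hd u = x}. seq_prob a before u) \<le> step_prob a before x"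
        if x: "x = 1 \<or> x = -1" for x
      proof -
        have in_S: "x # v \<in> S" if "v \<in> S' x" for v using S_x[of x] that by blast
        have "(\<Sum>v\<in>S' x. seq_prob a (Some x) v) \<le> 1"
        proof (rule Suc.IH)
          show "\<forall>u\<in>S' x. set u \<subseteq> {-1, 1}" "\<forall>u\<in>S' x. length u \<le> m"
            using in_S Suc.prems(3,5) by fastforce+
          show "\<forall>u\<in>S' x. \<forall>v\<in>S' x. prefix u v \<longrightarrow> u = v"
          proof (intro ballI impI)
            fix u v assume "u \<in> S' x" "v \<in> S' x" "prefix u v"
            then have "prefix (x # u) (x # v)" "x # u \<in> S" "x # v \<in> S" using in_S by simp_all
            then show "u = v" using Suc.prems(4) by blast
          qed
        qed (use x Suc.prems(2) in \<open>auto simp: S'_def\<close>)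
        then have "step_prob a before x * (\<Sum>v\<in>S' x. seq_prob a (Some x) v) \<le> step_prob a before x"
          using step_prob_nonneg[OF assms(1,2)] by (simp add: mult_left_le)
        then show ?thesis
          unfolding S_x by (simp add: sum.reindex sum_distrib_left)
      qed
      have "hd u = 1 \<or> hd u = -1" if "u \<in> S" for u
      proof -
        have "hd u \<in> set u" using that False by (cases u) auto
        then show ?thesis using Suc.prems(3) that by auto
      qed
      then have split: "{u\<in>S. hd u = 1} \<union> {u\<in>S. hd u = -1} = S" by auto
      have "(\<Sum>u\<in>{u\<in>S. hd u = 1} \<union> {u\<in>S. hd u = -1}. seq_prob a before u) =
          (\<Sum>u\<in>{u\<in>S. hd u = 1}. seq_prob a before u) + (\<Sum>u\<in>{u\<in>S. hd u = -1}. seq_prob a before u)"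
        by (rule sum.union_disjoint) (use Suc.prems(2) in auto)
      then have "(\<Sum>u\<in>S. seq_prob a before u) =
          (\<Sum>u\<in>{u\<in>S. hd u = 1}. seq_prob a before u) + (\<Sum>u\<in>{u\<in>S. hd u = -1}. seq_prob a before u)"
        unfolding split .
      also have "\<dots> \<le> step_prob a before 1 + step_prob a before (-1)"
        using part[of 1] part[of "-1"] by simp
      also have "\<dots> = 1" using Suc.prems(1) by (auto simp: step_prob_def)
      finally show ?thesis .
    qed
  qed
  moreover have "\<forall>u\<in>S. length u \<le> Max (length ` S)" using assms(4) by simp
  ultimately show ?thesis using assms(3-6) by blast
qed

lemma exc_paths_prefix_free:
  assumes u: "u \<in> exc_paths n N" and v: "v \<in> exc_paths m N" and "prefix u v"
  shows "u = v"
proof -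
  obtain w where w: "v = u @ w" using \<open>prefix u v\<close> by (auto simp: prefix_def)
  have lens: "length u = n" "1 \<le> n" "length v = m" using u v by (auto simp: exc_paths_def)
  have "walk v n = walk u n" using w lens by (simp add: walk_append)
  also have "\<dots> = 0" using u by (simp add: exc_paths_def)
  finally have "\<not> n < m" using v lens by (auto simp: exc_paths_def)
  then show ?thesis using w lens by (cases w) auto
qed

lemma sum_exc_paths_path_prob_le_1:
  assumes "0 \<le> a" "a \<le> 1"
  shows "(\<Sum>n\<le>M. \<Sum>es\<in>exc_paths n N. path_prob a es) \<le> 1"
proof -
  have "exc_paths i N \<inter> exc_paths j N = {}" if "i \<noteq> j" for i j
    using that by (auto simp: exc_paths_def)
  then have "(\<Sum>n\<le>M. \<Sum>es\<in>exc_paths n N. path_prob a es) =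
      (\<Sum>es\<in>(\<Union>n\<le>M. exc_paths n N). seq_prob a None es)"
    by (subst sum.UNION_disjoint) (auto simp: finite_exc_paths path_prob_eq_seq_prob)
  also have "\<dots> \<le> 1"
  proof (rule sum_seq_prob_prefix_free_le_1)
    show "finite (\<Union>n\<le>M. exc_paths n N)" by (simp add: finite_exc_paths)
    show "\<forall>u\<in>(\<Union>n\<le>M. exc_paths n N). set u \<subseteq> {-1, 1}" by (auto simp: exc_paths_def)
    show "\<forall>u\<in>(\<Union>n\<le>M. exc_paths n N). \<forall>v\<in>(\<Union>n\<le>M. exc_paths n N). prefix u v \<longrightarrow> u = v"
      using exc_paths_prefix_free by blast
  qed (use assms in auto)
  finally show ?thesis .
qed

text \<open>Evaluation at \<open>z = 1\<close> of power series with absolutely summable coefficients; this is a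
  ring homomorphism by the Cauchy product theorem.\<close>

definition fps_abs_summable :: "real fps \<Rightarrow> bool" where
  "fps_abs_summable F \<longleftrightarrow> summable (\<lambda>n. \<bar>F $ n\<bar>)"

definition fps_sum :: "real fps \<Rightarrow> real" where
  "fps_sum F = (\<Sum>n. F $ n)"

lemma fps_abs_summable_finite_support:
  assumes "\<And>n. d < n \<Longrightarrow> F $ n = 0"
  shows "fps_abs_summable F" and "fps_sum F = (\<Sum>n\<le>d. F $ n)"
proof -
  have "(\<lambda>n. \<bar>F $ n\<bar>) sums (\<Sum>n<Suc d. \<bar>F $ n\<bar>)"
    by (rule sums_finite) (use assms in auto)
  then show "fps_abs_summable F" unfolding fps_abs_summable_def by (rule sums_summable)
  have "(\<lambda>n. F $ n) sums (\<Sum>n<Suc d. F $ n)"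
    by (rule sums_finite) (use assms in auto)
  then show "fps_sum F = (\<Sum>n\<le>d. F $ n)"
    unfolding fps_sum_def by (simp add: sums_iff lessThan_Suc_atMost)
qed

lemma fps_abs_summable_const [simp]: "fps_abs_summable (fps_const c)"
  and fps_sum_const [simp]: "fps_sum (fps_const c) = c"
  using fps_abs_summable_finite_support[of 0 "fps_const c"] by auto

lemma fps_abs_summable_zero [simp]: "fps_abs_summable 0"
  and fps_sum_zero [simp]: "fps_sum 0 = 0"
  and fps_abs_summable_one [simp]: "fps_abs_summable 1"
  and fps_sum_one [simp]: "fps_sum 1 = 1"
  using fps_abs_summable_const[of 0] fps_sum_const[of 0]
    fps_abs_summable_const[of 1] fps_sum_const[of 1] by simp_all

lemma fps_abs_summable_X [simp]: "fps_abs_summable fps_X"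
  and fps_sum_X [simp]: "fps_sum fps_X = 1"
  using fps_abs_summable_finite_support[of 1 fps_X] by (auto simp: fps_X_def)

lemma fps_abs_summable_add [simp]:
    "fps_abs_summable F \<Longrightarrow> fps_abs_summable G \<Longrightarrow> fps_abs_summable (F + G)"
  and fps_sum_add [simp]:
    "fps_abs_summable F \<Longrightarrow> fps_abs_summable G \<Longrightarrow> fps_sum (F + G) = fps_sum F + fps_sum G"
proof -
  assume F: "fps_abs_summable F" and G: "fps_abs_summable G"
  have "summable (\<lambda>n. \<bar>F $ n\<bar> + \<bar>G $ n\<bar>)"
    using F G unfolding fps_abs_summable_def by (rule summable_add)
  then show "fps_abs_summable (F + G)"
    unfolding fps_abs_summable_def
    by (rule summable_comparison_test'[where N = 0]) (simp add: abs_triangle_ineq)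
  show "fps_sum (F + G) = fps_sum F + fps_sum G"
    using suminf_add[OF summable_rabs_cancel summable_rabs_cancel] F G
    by (simp add: fps_sum_def fps_abs_summable_def)
qed

lemma fps_abs_summable_uminus [simp]: "fps_abs_summable F \<Longrightarrow> fps_abs_summable (- F)"
  and fps_sum_uminus [simp]: "fps_abs_summable F \<Longrightarrow> fps_sum (- F) = - fps_sum F"
  by (simp_all add: fps_abs_summable_def fps_sum_def suminf_minus summable_rabs_cancel)

lemma fps_abs_summable_diff [simp]:
    "fps_abs_summable F \<Longrightarrow> fps_abs_summable G \<Longrightarrow> fps_abs_summable (F - G)"
  and fps_sum_diff [simp]:
    "fps_abs_summable F \<Longrightarrow> fps_abs_summable G \<Longrightarrow> fps_sum (F - G) = fps_sum F - fps_sum G"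
  using fps_abs_summable_add[of F "- G"] fps_sum_add[of F "- G"] by simp_all

lemma fps_abs_summable_mult [simp]:
    "fps_abs_summable F \<Longrightarrow> fps_abs_summable G \<Longrightarrow> fps_abs_summable (F * G)"
  and fps_sum_mult [simp]:
    "fps_abs_summable F \<Longrightarrow> fps_abs_summable G \<Longrightarrow> fps_sum (F * G) = fps_sum F * fps_sum G"
proof -
  assume F: "fps_abs_summable F" and G: "fps_abs_summable G"
  then have F': "summable (\<lambda>n. norm (F $ n))" and G': "summable (\<lambda>n. norm (G $ n))"
    by (simp_all add: fps_abs_summable_def)
  have nth: "(F * G) $ n = (\<Sum>i\<le>n. F $ i * G $ (n - i))" for n
    by (simp add: fps_mult_nth atMost_atLeast0)
  have "summable (\<lambda>n. \<Sum>i\<le>n. norm (F $ i) * norm (G $ (n - i)))"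
    using Cauchy_product_sums[of "\<lambda>n. norm (F $ n)" "\<lambda>n. norm (G $ n)"] F' G'
    by (simp add: sums_summable)
  then show "fps_abs_summable (F * G)"
    unfolding fps_abs_summable_def
  proof (rule summable_comparison_test'[where N = 0])
    show "norm \<bar>(F * G) $ n\<bar> \<le> (\<Sum>i\<le>n. norm (F $ i) * norm (G $ (n - i)))" for n
      using sum_abs[of "\<lambda>i. F $ i * G $ (n - i)" "{..n}"] by (simp add: nth abs_mult)
  qed
  show "fps_sum (F * G) = fps_sum F * fps_sum G"
    using Cauchy_product_sums[OF F' G'] by (simp add: fps_sum_def nth sums_iff)
qed

lemma fps_abs_summable_power [simp]: "fps_abs_summable F \<Longrightarrow> fps_abs_summable (F ^ n)"
  and fps_sum_power [simp]: "fps_abs_summable F \<Longrightarrow> fps_sum (F ^ n) = fps_sum F ^ n"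
  by (induction n) simp_all

lemma dyck_num_den_at_1:
  "fps_abs_summable (dyck_num a 1 1 h) \<and> fps_abs_summable (dyck_den a 1 1 h) \<and>
   fps_sum (dyck_num a 1 1 h) = a^h * (1-a) * h \<and>
   fps_sum (dyck_den a 1 1 h) = a^h * (h + 1 - h * a)"
proof (induction h)
  case (Suc h)
  then have P: "fps_abs_summable (dyck_num a 1 1 h)" "fps_sum (dyck_num a 1 1 h) = a^h * (1-a) * h"
    and Q: "fps_abs_summable (dyck_den a 1 1 h)" "fps_sum (dyck_den a 1 1 h) = a^h * (h + 1 - h * a)"
    by auto
  have tm: "fps_abs_summable (tm11 a 1 1)" "fps_sum (tm11 a 1 1) = a^2"
    "fps_abs_summable (tm12 a 1)" "fps_sum (tm12 a 1) = a * (1-a)"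
    "fps_abs_summable (tm21 a 1)" "fps_sum (tm21 a 1) = - ((1-a) * a)"
    "fps_abs_summable (tm22 a 1 1)" "fps_sum (tm22 a 1 1) = 1 - (1-a)^2"
    by (simp_all add: tm11_def tm12_def tm21_def tm22_def power2_eq_square)
  have "fps_sum (dyck_num a 1 1 (Suc h)) = a^2 * (a^h * (1-a) * h) + a * (1-a) * (a^h * (h + 1 - h * a))"
    and "fps_sum (dyck_den a 1 1 (Suc h)) =
      - ((1-a) * a) * (a^h * (1-a) * h) + (1 - (1-a)^2) * (a^h * (h + 1 - h * a))"
    unfolding dyck_num_Suc dyck_den_Suc by (simp_all add: P Q tm)
  moreover have "fps_abs_summable (dyck_num a 1 1 (Suc h))" "fps_abs_summable (dyck_den a 1 1 (Suc h))"
    unfolding dyck_num_Suc dyck_den_Suc by (simp_all add: P(1) Q(1) tm)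
  ultimately show ?case by (simp add: algebra_simps power2_eq_square)
qed simp

lemma exc_weight_gf_at_1:
  assumes "0 \<le> a" "a \<le> 1"
  shows "fps_abs_summable (exc_weight_gf a 1 1 N)" and "fps_sum (exc_weight_gf a 1 1 N) = prob_H_le a N"
proof -
  have nonneg: "0 \<le> exc_weight_gf a 1 1 N $ n" for n
    using assms by (auto simp: exc_weight_gf_def path_prob_eq_seq_prob intro!: sum_nonneg seq_prob_nonneg)
  have "summable (\<lambda>n. exc_weight_gf a 1 1 N $ n)"
    using nonneg sum_exc_paths_path_prob_le_1[OF assms]
    by (intro bounded_imp_summable[where B = 1]) (simp_all add: exc_weight_gf_def)
  then show "fps_abs_summable (exc_weight_gf a 1 1 N)"
    using nonneg by (simp add: fps_abs_summable_def)
  show "fps_sum (exc_weight_gf a 1 1 N) = prob_H_le a N"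
    by (simp add: fps_sum_def exc_weight_gf_def prob_H_le_def)
qed

lemma prob_H_le_Suc:
  assumes "0 < a" "a < 1"
  shows "prob_H_le a (Suc h) = real (Suc h) * (1 - a) / (real (Suc h) - real h * a)"
proof -
  let ?G = "exc_weight_gf a 1 1 (Suc h)" and ?P = "dyck_num a 1 1 h" and ?Q = "dyck_den a 1 1 h"
  have G: "fps_abs_summable ?G" "fps_sum ?G = prob_H_le a (Suc h)"
    using exc_weight_gf_at_1[of a] assms by simp_all
  note PQ = dyck_num_den_at_1[of a h]
  have "fps_sum (?G * ?Q) = fps_sum (fps_X^2 * (fps_const (1-a) * ?Q + fps_const a * ?P))"
    using exc_weight_gf_mult_den[of a 1 1 h] by simp
  then have "a^h * (prob_H_le a (Suc h) * (real (Suc h) - real h * a)) = a^h * (real (Suc h) * (1 - a))"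
    using G PQ by (simp add: algebra_simps)
  then have "prob_H_le a (Suc h) * (real (Suc h) - real h * a) = real (Suc h) * (1 - a)"
    using assms by simp
  moreover have "0 < real (Suc h) - real h * a"
    using assms mult_left_le[of a "real h"] by simp
  ultimately show ?thesis by (simp add: eq_divide_eq)
qed

theorem proposition5:
  fixes a r y :: real and N :: nat
  assumes "0 < a" and "a < 1" and "1 \<le> N"
  shows "K_fps a r y N =
    fps_const ((real N - (real N - 1) * a) / real N) *
      (fps_const (r^2) * fps_X^2 * q_star a r y N / w_star a r y N)"
proof -
  obtain h where N: "N = Suc h" using assms(3) by (cases N) auto
  have "K_fps a r y N = fps_const (1 / prob_H_le a N) * exc_weight_gf a r y N"
    by (simp add: K_fps_def exc_weight_gf_def fps_eq_iff)
  also have "\<dots> = fps_const (1 / prob_H_le a N * (1 - a)) *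
      (fps_const (r^2) * fps_X^2 * q_star a r y N / w_star a r y N)"
    unfolding N exc_weight_gf_eq_quotient[OF less_imp_neq[OF assms(1), symmetric]]
    by (simp add: mult.assoc)
  also have "1 / prob_H_le a N * (1 - a) = (real N - (real N - 1) * a) / real N"
    using assms(1,2) unfolding N prob_H_le_Suc[OF assms(1,2)] by simp
  finally show ?thesis .
qed

end
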